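(* Let $G=(V,E)$ be a finite simple graph, let $A$ be a nonzero commutative ring with unity, let $R=A[V]$, and let $S\subseteq V$. Then $$\mathcal{N}_S(G)=\bigcap_{D}(D)R=\bigcap_{D\ \mathrm{minimal}}(D)R,$$ where the first intersection is over all $S$-TD-sets $D$ of $G$ and the second over all minimal $S$-TD-sets of $G$. Moreover, the second decomposition is irredundant.
   Context: For $v\in V$, $N(v)=\{u\in V: uv\in E\}$, and for $D\subseteq V$, $N(D)=\bigcup_{v\in D}N(v)$. For $U\subseteq V$, $X_U=\prod_{v\in U}v\in A[V]$. The $S$-open neighborhood ideal is $\mathcal{N}_S(G)=(X_{N(v)}\mid v\in S)R$. A set $D\subseteq V$ is an $S$-TD-set of $G$ if $N(D)\supseteq S$; it is minimal if no proper subset of $D$ is an $S$-TD-set. $(D)R$ is the ideal generated by the variables in $D$. *)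

theory Defs
  imports "HOL-Library.Poly_Mapping"
begin

text \<open>Polynomial ring A[V]: finitely supported maps from monomials (exponent vectors
  of type v to nat) to coefficients in A.\<close>
type_synonym ('v, 'a) mpol = "('v \<Rightarrow>\<^sub>0 nat) \<Rightarrow>\<^sub>0 'a"

definition var :: "'v \<Rightarrow> ('v, 'a::comm_ring_1) mpol" where
  "var v = Poly_Mapping.single (Poly_Mapping.single v 1) 1"

definition monom_X :: "'v set \<Rightarrow> ('v, 'a::comm_ring_1) mpol" where
  "monom_X U = (\<Prod>v\<in>U. var v)"

definition is_ideal :: "'r::comm_ring_1 set \<Rightarrow> bool" where
  "is_ideal I \<longleftrightarrow> 0 \<in> I \<and> (\<forall>x\<in>I. \<forall>y\<in>I. x + y \<in> I) \<and> (\<forall>r. \<forall>x\<in>I. r * x \<in> I)"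

definition gen_ideal :: "'r::comm_ring_1 set \<Rightarrow> 'r set" where
  "gen_ideal X = \<Inter> {I. X \<subseteq> I \<and> is_ideal I}"

definition nbhd :: "('v \<Rightarrow> 'v \<Rightarrow> bool) \<Rightarrow> 'v \<Rightarrow> 'v set" where
  "nbhd E v = {u. E u v}"

definition nbhd_set :: "('v \<Rightarrow> 'v \<Rightarrow> bool) \<Rightarrow> 'v set \<Rightarrow> 'v set" where
  "nbhd_set E D = (\<Union>v\<in>D. nbhd E v)"

definition open_nbhd_ideal :: "('v \<Rightarrow> 'v \<Rightarrow> bool) \<Rightarrow> 'v set \<Rightarrow> ('v, 'a::comm_ring_1) mpol set" where
  "open_nbhd_ideal E S = gen_ideal ((\<lambda>v. monom_X (nbhd E v)) ` S)"

definition is_STD :: "('v \<Rightarrow> 'v \<Rightarrow> bool) \<Rightarrow> 'v set \<Rightarrow> 'v set \<Rightarrow> bool" where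
  "is_STD E S D \<longleftrightarrow> S \<subseteq> nbhd_set E D"

definition is_min_STD :: "('v \<Rightarrow> 'v \<Rightarrow> bool) \<Rightarrow> 'v set \<Rightarrow> 'v set \<Rightarrow> bool" where
  "is_min_STD E S D \<longleftrightarrow> is_STD E S D \<and> (\<forall>D'. D' \<subset> D \<longrightarrow> \<not> is_STD E S D')"

definition var_ideal :: "'v set \<Rightarrow> ('v, 'a::comm_ring_1) mpol set" where
  "var_ideal D = gen_ideal (var ` D)"

end

theory Submission imports Defs begin

text \<open>A polynomial lies in \<open>(D)R\<close> exactly when every monomial of its support involves a
  variable of \<open>D\<close>; in particular a squarefree monomial \<open>X_U\<close> lies in \<open>(D)R\<close> iff \<open>U\<close> meets
  \<open>D\<close>. Hence the intersection of the \<open>(D)R\<close> over all sets \<open>D\<close> meeting every \<open>N(v)\<close>, \<open>v \<in> S\<close>,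
  consists of the polynomials each of whose monomials is divisible by some \<open>X_N(v)\<close>:
  otherwise choosing, for each \<open>v\<close>, a neighbour outside the support of that monomial would
  give such a \<open>D\<close> missing it. By symmetry of \<open>E\<close> these \<open>D\<close> are exactly the \<open>S\<close>-TD-sets.
  Restricting to minimal ones changes nothing, and the decomposition is irredundant because
  \<open>X_(V - D0)\<close> lies in \<open>(D)R\<close> for every minimal \<open>D \<noteq> D0\<close> (such a \<open>D\<close> is not contained
  in \<open>D0\<close>) but not in \<open>(D0)R\<close>.\<close>

lemma is_ideal_gen_ideal: "is_ideal (gen_ideal X)"
  unfolding gen_ideal_def is_ideal_def by blast

lemma gen_ideal_superset: "X \<subseteq> gen_ideal X"
  unfolding gen_ideal_def by blast

lemma gen_ideal_least: "X \<subseteq> I \<Longrightarrow> is_ideal I \<Longrightarrow> gen_ideal X \<subseteq> I"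
  unfolding gen_ideal_def by blast

lemma ideal_mult_left: "is_ideal I \<Longrightarrow> x \<in> I \<Longrightarrow> r * x \<in> I"
  unfolding is_ideal_def by blast

lemma ideal_sum: "is_ideal I \<Longrightarrow> (\<And>x. x \<in> A \<Longrightarrow> f x \<in> I) \<Longrightarrow> sum f A \<in> I"
  by (induction A rule: infinite_finite_induct) (auto simp: is_ideal_def)

lemma sum_single_lookup_keys:
  "(\<Sum>k\<in>Poly_Mapping.keys p. Poly_Mapping.single k (Poly_Mapping.lookup p k)) = p"
  by (rule poly_mapping_eqI) (simp add: lookup_sum lookup_single when_def in_keys_iff)

lemma is_ideal_keys_subset:
  assumes "\<And>a b. b \<in> P \<Longrightarrow> a + b \<in> P"
  shows "is_ideal {f :: 'k::comm_monoid_add \<Rightarrow>\<^sub>0 'a::comm_ring_1. Poly_Mapping.keys f \<subseteq> P}"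
proof -
  have "Poly_Mapping.keys (x + y) \<subseteq> P"
    if "Poly_Mapping.keys x \<subseteq> P" "Poly_Mapping.keys y \<subseteq> P" for x y :: "'k \<Rightarrow>\<^sub>0 'a"
    using that keys_add[of x y] by blast
  moreover have "Poly_Mapping.keys (r * x) \<subseteq> P"
    if "Poly_Mapping.keys x \<subseteq> P" for r x :: "'k \<Rightarrow>\<^sub>0 'a"
    using that keys_mult[of r x] assms by blast
  ultimately show ?thesis
    unfolding is_ideal_def by simp
qed

definition set_exponent :: "'v set \<Rightarrow> 'v \<Rightarrow>\<^sub>0 nat" where
  "set_exponent U = (\<Sum>u\<in>U. Poly_Mapping.single u 1)"

lemma lookup_set_exponent:
  "finite U \<Longrightarrow> Poly_Mapping.lookup (set_exponent U) u = (if u \<in> U then 1 else 0)"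
  by (simp add: set_exponent_def lookup_sum lookup_single when_def)

lemma keys_set_exponent: "finite U \<Longrightarrow> Poly_Mapping.keys (set_exponent U) = U"
  by (auto simp: in_keys_iff lookup_set_exponent split: if_splits)

lemma monom_X_eq_single:
  "finite U \<Longrightarrow> (monom_X U :: ('v, 'a::comm_ring_1) mpol) = Poly_Mapping.single (set_exponent U) 1"
proof (induction U rule: finite_induct)
  case empty
  then show ?case by (simp add: monom_X_def set_exponent_def one_poly_mapping.abs_eq single.abs_eq)
next
  case (insert x F)
  then show ?case by (simp add: monom_X_def set_exponent_def var_def mult_single)
qed

lemma single_eq_mult_monom_X:
  assumes "finite U" "U \<subseteq> Poly_Mapping.keys m"
  shows "Poly_Mapping.single m c
    = Poly_Mapping.single (m - set_exponent U) c * (monom_X U :: ('v, 'a::comm_ring_1) mpol)"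
proof -
  have "m - set_exponent U + set_exponent U = m"
    by (rule poly_mapping_eqI)
      (use assms in \<open>auto simp: lookup_add lookup_minus lookup_set_exponent in_keys_iff\<close>)
  then show ?thesis
    by (simp add: assms(1) monom_X_eq_single mult_single)
qed

lemma var_ideal_mono: "D' \<subseteq> D \<Longrightarrow> var_ideal D' \<subseteq> var_ideal D"
  unfolding var_ideal_def
  by (rule gen_ideal_least) (use gen_ideal_superset is_ideal_gen_ideal in blast)+

lemma keys_inter_if_in_var_ideal:
  assumes "(f :: ('v, 'a::comm_ring_1) mpol) \<in> var_ideal D" "m \<in> Poly_Mapping.keys f"
  shows "Poly_Mapping.keys m \<inter> D \<noteq> {}"
proof -
  let ?P = "{m :: 'v \<Rightarrow>\<^sub>0 nat. Poly_Mapping.keys m \<inter> D \<noteq> {}}"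
  have "var_ideal D \<subseteq> {f :: ('v, 'a) mpol. Poly_Mapping.keys f \<subseteq> ?P}"
    unfolding var_ideal_def
  proof (rule gen_ideal_least)
    show "var ` D \<subseteq> {f :: ('v, 'a) mpol. Poly_Mapping.keys f \<subseteq> ?P}"
      by (auto simp: var_def)
    show "is_ideal {f :: ('v, 'a) mpol. Poly_Mapping.keys f \<subseteq> ?P}"
    proof (rule is_ideal_keys_subset)
      fix a b :: "'v \<Rightarrow>\<^sub>0 nat"
      assume "b \<in> ?P"
      then obtain d where "d \<in> D" "d \<in> Poly_Mapping.keys b" by blast
      then have "d \<in> Poly_Mapping.keys (a + b) \<inter> D"
        by (simp add: in_keys_iff lookup_add)
      then show "a + b \<in> ?P" by blast
    qed
  qed
  then show ?thesis
    using assms by blast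
qed

lemma monom_X_in_var_ideal_iff:
  assumes "finite U"
  shows "(monom_X U :: ('v, 'a::comm_ring_1) mpol) \<in> var_ideal D \<longleftrightarrow> U \<inter> D \<noteq> {}"
proof
  assume "monom_X U \<in> (var_ideal D :: ('v, 'a) mpol set)"
  moreover have "set_exponent U \<in> Poly_Mapping.keys (monom_X U :: ('v, 'a) mpol)"
    by (simp add: assms monom_X_eq_single)
  ultimately show "U \<inter> D \<noteq> {}"
    using keys_inter_if_in_var_ideal keys_set_exponent[OF assms] by metis
next
  assume "U \<inter> D \<noteq> {}"
  then obtain d where d: "d \<in> U" "d \<in> D" by blast
  then have "(monom_X U :: ('v, 'a) mpol) = monom_X (U - {d}) * var d"
    using assms by (simp add: monom_X_def prod.remove mult.commute)
  moreover have "var d \<in> (var_ideal D :: ('v, 'a) mpol set)"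
    unfolding var_ideal_def using d(2) gen_ideal_superset by blast
  ultimately show "monom_X U \<in> (var_ideal D :: ('v, 'a) mpol set)"
    unfolding var_ideal_def by (metis ideal_mult_left is_ideal_gen_ideal)
qed

lemma monomial_ideal_eq_Inter_transversals:
  assumes fin: "\<And>i. i \<in> I \<Longrightarrow> finite (F i)"
  shows "gen_ideal ((\<lambda>i. monom_X (F i)) ` I)
    = (\<Inter> {var_ideal D | D. \<forall>i\<in>I. F i \<inter> D \<noteq> {}} :: ('v, 'a::comm_ring_1) mpol set)"
    (is "?J = \<Inter> ?T")
proof (intro equalityI subsetI)
  fix f assume "f \<in> ?J"
  moreover have "?J \<subseteq> var_ideal D" if "\<forall>i\<in>I. F i \<inter> D \<noteq> {}" for D
  proof (rule gen_ideal_least)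
    show "(\<lambda>i. monom_X (F i)) ` I \<subseteq> var_ideal D"
      using that fin by (auto simp: monom_X_in_var_ideal_iff)
    show "is_ideal (var_ideal D :: ('v, 'a) mpol set)"
      unfolding var_ideal_def by (rule is_ideal_gen_ideal)
  qed
  ultimately show "f \<in> \<Inter> ?T" by blast
next
  fix f assume f: "f \<in> \<Inter> ?T"
  have "Poly_Mapping.single m (Poly_Mapping.lookup f m) \<in> ?J"
    if m: "m \<in> Poly_Mapping.keys f" for m
  proof -
    have "\<exists>i\<in>I. F i \<subseteq> Poly_Mapping.keys m"
    proof (rule ccontr)
      assume "\<not> ?thesis"
      then have "\<forall>i\<in>I. \<exists>u. u \<in> F i \<and> u \<notin> Poly_Mapping.keys m"
        by blast
      then obtain g where g: "\<And>i. i \<in> I \<Longrightarrow> g i \<in> F i \<and> g i \<notin> Poly_Mapping.keys m"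
        by metis
      then have "\<forall>i\<in>I. F i \<inter> g ` I \<noteq> {}"
        by blast
      with f have "f \<in> var_ideal (g ` I)"
        by blast
      from keys_inter_if_in_var_ideal[OF this m] show False
        using g by blast
    qed
    then obtain i where i: "i \<in> I" "F i \<subseteq> Poly_Mapping.keys m" by blast
    have "monom_X (F i) \<in> ?J"
      using i(1) by (intro gen_ideal_superset[THEN subsetD] imageI)
    then show ?thesis
      using single_eq_mult_monom_X[OF fin[OF i(1)] i(2)] ideal_mult_left[OF is_ideal_gen_ideal]
      by metis
  qed
  then have "(\<Sum>m\<in>Poly_Mapping.keys f. Poly_Mapping.single m (Poly_Mapping.lookup f m)) \<in> ?J"
    by (rule ideal_sum[OF is_ideal_gen_ideal])
  then show "f \<in> ?J"
    by (simp only: sum_single_lookup_keys)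
qed

lemma is_STD_iff_transversal:
  assumes "\<And>u v. E u v \<Longrightarrow> E v u"
  shows "is_STD E S D \<longleftrightarrow> (\<forall>v\<in>S. nbhd E v \<inter> D \<noteq> {})"
  unfolding is_STD_def nbhd_set_def nbhd_def using assms by blast

lemma exists_min_STD_subset:
  assumes "finite D" "is_STD E S D"
  shows "\<exists>D'. D' \<subseteq> D \<and> is_min_STD E S D'"
  using assms
proof (induction D rule: finite_psubset_induct)
  case (psubset D)
  show ?case
  proof (cases "is_min_STD E S D")
    case False
    then obtain D' where "D' \<subset> D" "is_STD E S D'"
      using psubset.prems unfolding is_min_STD_def by blast
    then show ?thesis
      using psubset.IH by (meson finite_subset order.trans psubset.hyps psubset_imp_subset)
  qed blast
qed

lemma Inter_min_STD_eq_Inter_STD: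
  fixes E :: "'v::finite \<Rightarrow> 'v \<Rightarrow> bool"
  shows "\<Inter> {var_ideal D | D. is_min_STD E S D}
    = (\<Inter> {var_ideal D | D. is_STD E S D} :: ('v, 'a::comm_ring_1) mpol set)"
proof (intro equalityI subsetI)
  fix f :: "('v, 'a) mpol"
  assume f: "f \<in> \<Inter> {var_ideal D | D. is_min_STD E S D}"
  have "f \<in> var_ideal D" if D: "is_STD E S D" for D
  proof -
    obtain D' where "D' \<subseteq> D" "is_min_STD E S D'"
      using exists_min_STD_subset[OF finite D] by blast
    then show ?thesis
      using f var_ideal_mono by blast
  qed
  then show "f \<in> \<Inter> {var_ideal D | D. is_STD E S D}" by blast
qed (auto simp: is_min_STD_def)

lemma min_STD_not_subset:
  "is_min_STD E S D \<Longrightarrow> is_min_STD E S D0 \<Longrightarrow> D \<noteq> D0 \<Longrightarrow> \<not> D \<subseteq> D0"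
  unfolding is_min_STD_def by blast

lemma Inter_other_min_STD_neq_Inter_STD:
  fixes E :: "'v::finite \<Rightarrow> 'v \<Rightarrow> bool"
  assumes D0: "is_min_STD E S D0"
  shows "\<Inter> {var_ideal D | D. is_min_STD E S D \<and> D \<noteq> D0}
    \<noteq> (\<Inter> {var_ideal D | D. is_STD E S D} :: ('v, 'a::comm_ring_1) mpol set)"
proof
  have "(monom_X (- D0) :: ('v, 'a) mpol) \<in> var_ideal D"
    if "is_min_STD E S D" "D \<noteq> D0" for D
    using min_STD_not_subset[OF that(1) D0 that(2)] by (simp add: monom_X_in_var_ideal_iff) blast
  then have "(monom_X (- D0) :: ('v, 'a) mpol) \<in> \<Inter> {var_ideal D | D. is_min_STD E S D \<and> D \<noteq> D0}"
    by blast
  moreover assume "\<Inter> {var_ideal D | D. is_min_STD E S D \<and> D \<noteq> D0}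
    = (\<Inter> {var_ideal D | D. is_STD E S D} :: ('v, 'a) mpol set)"
  moreover have "\<Inter> {var_ideal D | D. is_STD E S D} \<subseteq> (var_ideal D0 :: ('v, 'a) mpol set)"
    using D0 by (intro Inter_lower) (auto simp: is_min_STD_def)
  ultimately have "(monom_X (- D0) :: ('v, 'a) mpol) \<in> var_ideal D0"
    by (simp only: subset_iff)
  then show False
    by (simp add: monom_X_in_var_ideal_iff)
qed

theorem theorem2p6:
  fixes E :: "'v::finite \<Rightarrow> 'v \<Rightarrow> bool" and S :: "'v set"
  assumes sym: "\<And>u v. E u v \<Longrightarrow> E v u"
    and irrefl: "\<And>v. \<not> E v v"
  shows "(open_nbhd_ideal E S :: ('v, 'a::comm_ring_1) mpol set)
           = \<Inter> {var_ideal D | D. is_STD E S D}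
       \<and> (open_nbhd_ideal E S :: ('v, 'a) mpol set)
           = \<Inter> {var_ideal D | D. is_min_STD E S D}
       \<and> (\<forall>D0. is_min_STD E S D0 \<longrightarrow>
            \<Inter> {var_ideal D | D. is_min_STD E S D \<and> D \<noteq> D0}
              \<noteq> (open_nbhd_ideal E S :: ('v, 'a) mpol set))"
proof -
  have "(open_nbhd_ideal E S :: ('v, 'a) mpol set)
      = \<Inter> {var_ideal D | D. \<forall>v\<in>S. nbhd E v \<inter> D \<noteq> {}}"
    unfolding open_nbhd_ideal_def by (rule monomial_ideal_eq_Inter_transversals) simp
  also have "\<dots> = \<Inter> {var_ideal D | D. is_STD E S D}"
    by (simp only: is_STD_iff_transversal[OF sym])
  finally have STD: "(open_nbhd_ideal E S :: ('v, 'a) mpol set) = \<Inter> {var_ideal D | D. is_STD E S D}" .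
  show ?thesis
    unfolding STD Inter_min_STD_eq_Inter_STD by (simp add: Inter_other_min_STD_neq_Inter_STD)
qed

end
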